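(* Let $X$ be a simplicial set and $S\subseteq X^\sharp$ a set of non-degenerate simplices. Let $Y$ be the pushout in simplicial sets of $\bigsqcup_{s\in S}\Delta[m_s]\xleftarrow{\sqcup_s\rho_s}\bigsqcup_{s\in S}\Delta[n_s]\xrightarrow{(\bar s)_s}X$, with canonical map $q:X\to Y$. Then $q$ is degreewise surjective and there is a (unique) map $p:Y\to DX$ with $p\circ q=\eta_X$; $p$ is degreewise surjective. If $Y$ is non-singular, then $p$ is an isomorphism.
   Context: $X^\sharp$ is the set of non-degenerate simplices, $n_x$ the degree of $x$, $\bar x:\Delta[n_x]\to X$ its representing map, $\varepsilon_i:[0]\to[n]$ the operator $0\mapsto i$. A simplicial set is non-singular if every non-degenerate simplex has degreewise injective representing map. The desingularization $DX$ is the image of $X\to\prod_f Y$, $x\mapsto(f(x))_f$, over all quotient maps $f:X\to Y$ (maps $X\to X/R$ for operator-compatible families of equivalence relations) with $Y$ non-singular; $\eta_X:X\to DX$ is the corestriction. Enforcer: for $x\in X^\sharp$ of degree $n$, let $i\sim j$ iff $x\varepsilon_i=x\varepsilon_j$, $i\approx k$ iff some $j$ has $i\le k\le j$ and $i\sim j$, and $\simeq$ the equivalence relation generated by $\approx$; its classes are intervals, and $\rho_x:[n]\to[m_x]$ is the order-preserving surjection onto the ordered quotient $\{0,\dots,n\}/\simeq\cong[m_x]$. *)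

theory Defs
  imports Main
begin

text \<open>A simplicial set: for each degree n a set of n-simplices, and for each operator
  alpha : [m] -> [n] (an order-preserving map, represented by a function nat => nat whose
  values outside {0..m} are irrelevant) an action  sop X n m alpha : X_n -> X_m,  x |-> x alpha.\<close>

record 'a sset =
  sx :: "nat \<Rightarrow> 'a set"
  sop :: "nat \<Rightarrow> nat \<Rightarrow> (nat \<Rightarrow> nat) \<Rightarrow> 'a \<Rightarrow> 'a"

definition opr :: "nat \<Rightarrow> nat \<Rightarrow> (nat \<Rightarrow> nat) \<Rightarrow> bool" where
  "opr m n \<alpha> \<longleftrightarrow> (\<forall>i\<le>m. \<alpha> i \<le> n) \<and> (\<forall>i j. i \<le> j \<longrightarrow> j \<le> m \<longrightarrow> \<alpha> i \<le> \<alpha> j)"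

definition sset :: "'a sset \<Rightarrow> bool" where
  "sset X \<longleftrightarrow>
     (\<forall>n m \<alpha> x. opr m n \<alpha> \<longrightarrow> x \<in> sx X n \<longrightarrow> sop X n m \<alpha> x \<in> sx X m)
   \<and> (\<forall>n x. x \<in> sx X n \<longrightarrow> sop X n n id x = x)
   \<and> (\<forall>n m k \<alpha> \<beta> x. opr m n \<alpha> \<longrightarrow> opr k m \<beta> \<longrightarrow> x \<in> sx X n \<longrightarrow>
        sop X m k \<beta> (sop X n m \<alpha> x) = sop X n k (\<alpha> \<circ> \<beta>) x)
   \<and> (\<forall>n m \<alpha> \<alpha>' x. (\<forall>i\<le>m. \<alpha> i = \<alpha>' i) \<longrightarrow> x \<in> sx X n \<longrightarrow> sop X n m \<alpha> x = sop X n m \<alpha>' x)"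

definition smap :: "'a sset \<Rightarrow> 'b sset \<Rightarrow> (nat \<Rightarrow> 'a \<Rightarrow> 'b) \<Rightarrow> bool" where
  "smap X Y f \<longleftrightarrow> (\<forall>n x. x \<in> sx X n \<longrightarrow> f n x \<in> sx Y n)
     \<and> (\<forall>n m \<alpha> x. opr m n \<alpha> \<longrightarrow> x \<in> sx X n \<longrightarrow> f m (sop X n m \<alpha> x) = sop Y n m \<alpha> (f n x))"

definition siso :: "'a sset \<Rightarrow> 'b sset \<Rightarrow> (nat \<Rightarrow> 'a \<Rightarrow> 'b) \<Rightarrow> bool" where
  "siso X Y f \<longleftrightarrow> smap X Y f \<and> (\<exists>g. smap Y X g
      \<and> (\<forall>n x. x \<in> sx X n \<longrightarrow> g n (f n x) = x)
      \<and> (\<forall>n y. y \<in> sx Y n \<longrightarrow> f n (g n y) = y))"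

text \<open>Degenerate and non-degenerate simplices; X^sharp is a set of pairs (degree, simplex).\<close>
definition degenerate :: "'a sset \<Rightarrow> nat \<Rightarrow> 'a \<Rightarrow> bool" where
  "degenerate X n x \<longleftrightarrow> (\<exists>m \<sigma> y. m < n \<and> opr n m \<sigma> \<and> \<sigma> ` {0..n} = {0..m}
      \<and> y \<in> sx X m \<and> x = sop X m n \<sigma> y)"

definition nondeg :: "'a sset \<Rightarrow> (nat \<times> 'a) set" where
  "nondeg X = {(n, x). x \<in> sx X n \<and> \<not> degenerate X n x}"

text \<open>Standard simplex Delta[n]: k-simplices are operators [k] -> [n], normalised to 0 outside {0..k}.\<close>
definition cut :: "nat \<Rightarrow> (nat \<Rightarrow> nat) \<Rightarrow> nat \<Rightarrow> nat" where
  "cut k f = (\<lambda>i. if i \<le> k then f i else 0)"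

definition delta :: "nat \<Rightarrow> (nat \<Rightarrow> nat) sset" where
  "delta n = \<lparr> sx = (\<lambda>k. {\<alpha>. opr k n \<alpha> \<and> (\<forall>i>k. \<alpha> i = 0)}),
              sop = (\<lambda>_ k \<beta> \<alpha>. cut k (\<alpha> \<circ> \<beta>)) \<rparr>"

definition nonsingular :: "'a sset \<Rightarrow> bool" where
  "nonsingular X \<longleftrightarrow> (\<forall>(n, x) \<in> nondeg X. \<forall>k. inj_on (\<lambda>\<alpha>. sop X n k \<alpha> x) (sx (delta n) k))"

definition qrel :: "'a sset \<Rightarrow> (nat \<Rightarrow> ('a \<times> 'a) set) \<Rightarrow> bool" where
  "qrel X R \<longleftrightarrow> (\<forall>n. equiv (sx X n) (R n))
     \<and> (\<forall>n m \<alpha> x y. opr m n \<alpha> \<longrightarrow> (x, y) \<in> R n \<longrightarrow> (sop X n m \<alpha> x, sop X n m \<alpha> y) \<in> R m)"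

definition quot :: "'a sset \<Rightarrow> (nat \<Rightarrow> ('a \<times> 'a) set) \<Rightarrow> 'a set sset" where
  "quot X R = \<lparr> sx = (\<lambda>n. sx X n // R n),
               sop = (\<lambda>n m \<alpha> c. R m `` {sop X n m \<alpha> (SOME x. x \<in> c)}) \<rparr>"

definition goodrel :: "'a sset \<Rightarrow> (nat \<Rightarrow> ('a \<times> 'a) set) \<Rightarrow> bool" where
  "goodrel X R \<longleftrightarrow> qrel X R \<and> nonsingular (quot X R)"

text \<open>eta_X : X -> prod_R X/R (product over all quotient maps to non-singular targets;
  components at indices R that are not such quotients are set to a dummy value).\<close>
definition eta :: "'a sset \<Rightarrow> nat \<Rightarrow> 'a \<Rightarrow> (nat \<Rightarrow> ('a \<times> 'a) set) \<Rightarrow> 'a set" where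
  "eta X n x = (\<lambda>R. if goodrel X R then R n `` {x} else {})"

text \<open>DX: the image of eta_X, with the (componentwise) product structure.\<close>
definition desing :: "'a sset \<Rightarrow> ((nat \<Rightarrow> ('a \<times> 'a) set) \<Rightarrow> 'a set) sset" where
  "desing X = \<lparr> sx = (\<lambda>n. eta X n ` sx X n),
                 sop = (\<lambda>n m \<alpha> F. (\<lambda>R. if goodrel X R then sop (quot X R) n m \<alpha> (F R) else {})) \<rparr>"

definition esim :: "'a sset \<Rightarrow> nat \<Rightarrow> 'a \<Rightarrow> nat \<Rightarrow> nat \<Rightarrow> bool" where
  "esim X n x i j \<longleftrightarrow> sop X n 0 (\<lambda>_. i) x = sop X n 0 (\<lambda>_. j) x"

definition eapprox :: "'a sset \<Rightarrow> nat \<Rightarrow> 'a \<Rightarrow> (nat \<times> nat) set" where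
  "eapprox X n x = {(i, k). \<exists>j. i \<le> k \<and> k \<le> j \<and> j \<le> n \<and> esim X n x i j}"

definition eeq :: "'a sset \<Rightarrow> nat \<Rightarrow> 'a \<Rightarrow> (nat \<times> nat) set" where
  "eeq X n x = (eapprox X n x \<union> (eapprox X n x)\<inverse>)\<^sup>*"

definition eclasses :: "'a sset \<Rightarrow> nat \<Rightarrow> 'a \<Rightarrow> nat set set" where
  "eclasses X n x = {0..n} // eeq X n x"

text \<open>m_x: the ordered quotient {0..n}/~ has m_x + 1 elements.\<close>
definition mdeg :: "'a sset \<Rightarrow> nat \<Rightarrow> 'a \<Rightarrow> nat" where
  "mdeg X n x = card (eclasses X n x) - 1"

text \<open>rho_x(i) = position of the class of i in the ordered quotient (classes being intervals,
  this is the number of classes lying entirely below i).\<close>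
definition rho :: "'a sset \<Rightarrow> nat \<Rightarrow> 'a \<Rightarrow> nat \<Rightarrow> nat" where
  "rho X n x = (\<lambda>i. if i \<le> n then card {c \<in> eclasses X n x. \<forall>j\<in>c. j < i} else 0)"

definition coprod_delta :: "'s set \<Rightarrow> ('s \<Rightarrow> nat) \<Rightarrow> ('s \<times> (nat \<Rightarrow> nat)) sset" where
  "coprod_delta S d = \<lparr> sx = (\<lambda>k. {(s, \<alpha>). s \<in> S \<and> \<alpha> \<in> sx (delta (d s)) k}),
                        sop = (\<lambda>_ k \<beta> (s, \<alpha>). (s, cut k (\<alpha> \<circ> \<beta>))) \<rparr>"

definition po_rel :: "'b sset \<Rightarrow> 'c sset \<Rightarrow> 'a sset \<Rightarrow> (nat \<Rightarrow> 'c \<Rightarrow> 'b) \<Rightarrow> (nat \<Rightarrow> 'c \<Rightarrow> 'a)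
     \<Rightarrow> nat \<Rightarrow> (('b + 'a) \<times> ('b + 'a)) set" where
  "po_rel B C X g f n =
     (let D = sx B n <+> sx X n;
          G = {(Inl (g n c), Inr (f n c)) | c. c \<in> sx C n}
      in (G \<union> G\<inverse>)\<^sup>* \<inter> (D \<times> D))"

definition pushout :: "'b sset \<Rightarrow> 'c sset \<Rightarrow> 'a sset \<Rightarrow> (nat \<Rightarrow> 'c \<Rightarrow> 'b) \<Rightarrow> (nat \<Rightarrow> 'c \<Rightarrow> 'a)
     \<Rightarrow> ('b + 'a) set sset" where
  "pushout B C X g f = \<lparr> sx = (\<lambda>n. (sx B n <+> sx X n) // po_rel B C X g f n),
     sop = (\<lambda>n m \<alpha> c. po_rel B C X g f m ``
              {case (SOME z. z \<in> c) of Inl b \<Rightarrow> Inl (sop B n m \<alpha> b) | Inr x \<Rightarrow> Inr (sop X n m \<alpha> x)}) \<rparr>"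

definition po_inr :: "'b sset \<Rightarrow> 'c sset \<Rightarrow> 'a sset \<Rightarrow> (nat \<Rightarrow> 'c \<Rightarrow> 'b) \<Rightarrow> (nat \<Rightarrow> 'c \<Rightarrow> 'a)
     \<Rightarrow> nat \<Rightarrow> 'a \<Rightarrow> ('b + 'a) set" where
  "po_inr B C X g f n x = po_rel B C X g f n `` {Inr x}"

text \<open>The specific pushout of the theorem:
  coprod_s Delta[m_s] <- coprod_s rho_s - coprod_s Delta[n_s] - (bar s)_s -> X.\<close>
definition enf_B :: "'a sset \<Rightarrow> (nat \<times> 'a) set \<Rightarrow> ((nat \<times> 'a) \<times> (nat \<Rightarrow> nat)) sset" where
  "enf_B X S = coprod_delta S (\<lambda>s. mdeg X (fst s) (snd s))"

definition enf_C :: "(nat \<times> 'a) set \<Rightarrow> ((nat \<times> 'a) \<times> (nat \<Rightarrow> nat)) sset" where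
  "enf_C S = coprod_delta S fst"

definition enf_g :: "'a sset \<Rightarrow> nat \<Rightarrow> (nat \<times> 'a) \<times> (nat \<Rightarrow> nat) \<Rightarrow> (nat \<times> 'a) \<times> (nat \<Rightarrow> nat)" where
  "enf_g X k = (\<lambda>(s, \<alpha>). (s, cut k (rho X (fst s) (snd s) \<circ> \<alpha>)))"

definition enf_f :: "'a sset \<Rightarrow> nat \<Rightarrow> (nat \<times> 'a) \<times> (nat \<Rightarrow> nat) \<Rightarrow> 'a" where
  "enf_f X k = (\<lambda>(s, \<alpha>). sop X (fst s) k \<alpha> (snd s))"

definition enf_Y :: "'a sset \<Rightarrow> (nat \<times> 'a) set \<Rightarrow> (((nat \<times> 'a) \<times> (nat \<Rightarrow> nat)) + 'a) set sset" where
  "enf_Y X S = pushout (enf_B X S) (enf_C S) X (enf_g X) (enf_f X)"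

definition enf_q :: "'a sset \<Rightarrow> (nat \<times> 'a) set \<Rightarrow> nat \<Rightarrow> 'a \<Rightarrow> (((nat \<times> 'a) \<times> (nat \<Rightarrow> nat)) + 'a) set" where
  "enf_q X S = po_inr (enf_B X S) (enf_C S) X (enf_g X) (enf_f X)"

end

theory Submission
  imports Defs
begin

text \<open>Every simplex is a degeneration \<open>\<sigma>\<^sup>* d\<close> of a non-degenerate simplex \<open>d\<close>. In a
  non-singular simplicial set, equal vertices of \<open>x = \<sigma>\<^sup>* d\<close> force equal values of \<open>\<sigma>\<close>, and
  monotonicity of \<open>\<sigma>\<close> then makes \<open>\<sigma>\<close> constant on the classes of \<open>\<simeq>\<close>, i.e. \<open>\<sigma>\<close> factors
  through \<open>\<rho>_x\<close>. Applied in every non-singular quotient \<open>X/R\<close>, this shows that \<open>\<eta>_X\<close>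
  identifies \<open>x \<alpha>\<close> and \<open>x \<alpha>'\<close> whenever \<open>\<rho>_x \<alpha> = \<rho>_x \<alpha>'\<close>; hence \<open>\<eta>_X\<close> is constant along
  the gluing relation of the pushout and descends to \<open>p : Y \<rightarrow> DX\<close>. Since \<open>\<rho>_s\<close> has a monotone
  section, every new simplex of \<open>Y\<close> comes from \<open>X\<close>, so \<open>q\<close> and \<open>p\<close> are surjective. If \<open>Y\<close> is
  non-singular, the kernel of \<open>q\<close> is one of the relations defining \<open>DX\<close>, so \<open>\<eta>_X\<close> separates
  whatever \<open>q\<close> separates and \<open>p\<close> is bijective in every degree.\<close>

lemma rtrancl_Un_converse_map:
  assumes "\<And>x y. (x, y) \<in> G \<Longrightarrow> (h x, h y) \<in> H" and "(x, y) \<in> (G \<union> G\<inverse>)\<^sup>*"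
  shows "(h x, h y) \<in> (H \<union> H\<inverse>)\<^sup>*"
  using assms(2)
proof (induction rule: rtrancl_induct)
  case (step y z)
  with assms(1) have "(h y, h z) \<in> H \<union> H\<inverse>" by blast
  with step.IH show ?case by (rule rtrancl_into_rtrancl)
qed simp

corollary rtrancl_Un_converse_invariant:
  assumes "\<And>x y. (x, y) \<in> G \<Longrightarrow> h x = h y" and "(x, y) \<in> (G \<union> G\<inverse>)\<^sup>*"
  shows "h x = h y"
  using rtrancl_Un_converse_map[of G h Id x y] assms by simp

lemma opr_le: "opr m n \<alpha> \<Longrightarrow> i \<le> m \<Longrightarrow> \<alpha> i \<le> n"
  unfolding opr_def by blast

lemma opr_mono: "opr m n \<alpha> \<Longrightarrow> i \<le> j \<Longrightarrow> j \<le> m \<Longrightarrow> \<alpha> i \<le> \<alpha> j"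
  unfolding opr_def by blast

lemma opr_comp: "opr n m \<sigma> \<Longrightarrow> opr m k \<tau> \<Longrightarrow> opr n k (\<tau> \<circ> \<sigma>)"
  unfolding opr_def by (simp add: le_trans)

lemma opr_id: "opr n n id"
  unfolding opr_def by simp

lemma opr_const: "v \<le> n \<Longrightarrow> opr 0 n (\<lambda>_. v)"
  unfolding opr_def by simp

lemma sset_closed: "sset X \<Longrightarrow> opr m n \<alpha> \<Longrightarrow> x \<in> sx X n \<Longrightarrow> sop X n m \<alpha> x \<in> sx X m"
  unfolding sset_def by blast

lemma sset_id: "sset X \<Longrightarrow> x \<in> sx X n \<Longrightarrow> sop X n n id x = x"
  unfolding sset_def by blast

lemma sset_comp: "sset X \<Longrightarrow> opr m n \<alpha> \<Longrightarrow> opr k m \<beta> \<Longrightarrow> x \<in> sx X n \<Longrightarrow>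
    sop X m k \<beta> (sop X n m \<alpha> x) = sop X n k (\<alpha> \<circ> \<beta>) x"
  unfolding sset_def by blast

lemma sset_cong: "sset X \<Longrightarrow> (\<And>i. i \<le> m \<Longrightarrow> \<alpha> i = \<alpha>' i) \<Longrightarrow> x \<in> sx X n \<Longrightarrow>
    sop X n m \<alpha> x = sop X n m \<alpha>' x"
  unfolding sset_def by blast

lemma smap_in: "smap X Y f \<Longrightarrow> x \<in> sx X n \<Longrightarrow> f n x \<in> sx Y n"
  unfolding smap_def by blast

lemma smap_sop: "smap X Y f \<Longrightarrow> opr m n \<alpha> \<Longrightarrow> x \<in> sx X n \<Longrightarrow>
    f m (sop X n m \<alpha> x) = sop Y n m \<alpha> (f n x)"
  unfolding smap_def by blast

lemma siso_of_bij_betw: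
  assumes Y: "sset Y" and p: "smap Y Z p" and bij: "\<And>n. bij_betw (p n) (sx Y n) (sx Z n)"
  shows "siso Y Z p"
proof -
  define g where "g n = inv_into (sx Y n) (p n)" for n
  have g_in: "g n z \<in> sx Y n" and p_g: "p n (g n z) = z" if "z \<in> sx Z n" for n z
    using that bij[of n] unfolding g_def
    by (auto simp: bij_betw_def inv_into_into f_inv_into_f)
  have g_p: "g n (p n y) = y" if "y \<in> sx Y n" for n y
    using that bij[of n] unfolding g_def by (simp add: bij_betw_def)
  have "g m (sop Z n m \<alpha> z) = sop Y n m \<alpha> (g n z)" if "opr m n \<alpha>" "z \<in> sx Z n" for n m \<alpha> z
  proof -
    have "sop Z n m \<alpha> z = p m (sop Y n m \<alpha> (g n z))"
      using smap_sop[OF p that(1) g_in[OF that(2)]] p_g[OF that(2)] by simp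
    then show ?thesis using g_p sset_closed[OF Y that(1) g_in[OF that(2)]] by simp
  qed
  then have "smap Z Y g" unfolding smap_def using g_in by blast
  then show ?thesis unfolding siso_def using p g_p p_g by blast
qed

lemma delta_sx: "sx (delta N) k = {\<alpha>. opr k N \<alpha> \<and> (\<forall>i>k. \<alpha> i = 0)}"
  unfolding delta_def by simp

lemma opr_of_delta: "\<alpha> \<in> sx (delta N) k \<Longrightarrow> opr k N \<alpha>"
  unfolding delta_sx by simp

lemma cut_in_delta: "opr k N \<alpha> \<Longrightarrow> cut k \<alpha> \<in> sx (delta N) k"
  unfolding delta_sx opr_def cut_def by simp

lemma cut_of_delta: "\<alpha> \<in> sx (delta N) k \<Longrightarrow> cut k \<alpha> = \<alpha>"
  unfolding delta_sx cut_def by auto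

lemma cut_cong: "(\<And>i. i \<le> k \<Longrightarrow> \<alpha> i = \<alpha>' i) \<Longrightarrow> cut k \<alpha> = cut k \<alpha>'"
  unfolding cut_def by auto

lemma cut_comp_cut: "opr m n \<beta> \<Longrightarrow> cut m (cut n \<alpha> \<circ> \<beta>) = cut m (\<alpha> \<circ> \<beta>)"
  by (rule cut_cong) (simp add: cut_def opr_le)

lemma sset_coprod_delta: "sset (coprod_delta S d)"
  unfolding sset_def coprod_delta_def
  by (auto simp: cut_in_delta opr_comp cut_of_delta cut_comp_cut comp_assoc
           dest: opr_of_delta intro!: cut_cong)

lemma qrel_equiv: "qrel X R \<Longrightarrow> equiv (sx X n) (R n)"
  unfolding qrel_def by blast

lemma qrel_sop: "qrel X R \<Longrightarrow> opr m n \<alpha> \<Longrightarrow> (x, y) \<in> R n \<Longrightarrow> (sop X n m \<alpha> x, sop X n m \<alpha> y) \<in> R m"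
  unfolding qrel_def by blast

lemma quot_sx: "sx (quot X R) n = sx X n // R n"
  unfolding quot_def by simp

lemma quot_sop:
  assumes R: "qrel X R" and x: "x \<in> sx X n" and \<alpha>: "opr m n \<alpha>"
  shows "sop (quot X R) n m \<alpha> (R n `` {x}) = R m `` {sop X n m \<alpha> x}"
proof -
  have "x \<in> R n `` {x}" using qrel_equiv[OF R] x by (rule equiv_class_self)
  then have "(x, SOME z. z \<in> R n `` {x}) \<in> R n" by (metis Image_singleton_iff someI)
  from qrel_sop[OF R \<alpha> this]
  have "R m `` {sop X n m \<alpha> x} = R m `` {sop X n m \<alpha> (SOME z. z \<in> R n `` {x})}"
    by (rule equiv_class_eq[OF qrel_equiv[OF R]])
  then show ?thesis unfolding quot_def by simp
qed

lemma smap_quot: "sset X \<Longrightarrow> qrel X R \<Longrightarrow> smap X (quot X R) (\<lambda>n x. R n `` {x})"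
  unfolding smap_def quot_sx by (simp add: quotientI quot_sop sset_closed)

lemma sset_quot:
  assumes X: "sset X" and R: "qrel X R"
  shows "sset (quot X R)"
proof -
  have cls: "\<exists>x\<in>sx X n. c = R n `` {x}" if "c \<in> sx (quot X R) n" for c n
    using that unfolding quot_sx by (auto elim: quotientE)
  have cong: "sop (quot X R) n m \<alpha> c = sop (quot X R) n m \<alpha>' c"
    if "\<forall>i\<le>m. \<alpha> i = \<alpha>' i" "c \<in> sx (quot X R) n" for n m \<alpha> \<alpha>' c
  proof -
    have "(SOME z. z \<in> c) \<in> c"
      using that(2) in_quotient_imp_non_empty[OF qrel_equiv[OF R]] unfolding quot_sx
      by (simp add: some_in_eq)
    then have "(SOME z. z \<in> c) \<in> sx X n"
      using that(2) in_quotient_imp_subset[OF qrel_equiv[OF R]] unfolding quot_sx by blast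
    then have "sop X n m \<alpha> (SOME z. z \<in> c) = sop X n m \<alpha>' (SOME z. z \<in> c)"
      using that(1) by (intro sset_cong[OF X]) simp_all
    then show ?thesis unfolding quot_def by simp
  qed
  show ?thesis
    unfolding sset_def
  proof (intro conjI allI impI)
    fix n m \<alpha> c assume \<alpha>: "opr m n \<alpha>" and "c \<in> sx (quot X R) n"
    with cls obtain x where x: "x \<in> sx X n" and "c = R n `` {x}" by blast
    then show "sop (quot X R) n m \<alpha> c \<in> sx (quot X R) m"
      using \<alpha> by (simp add: quot_sop[OF R] quot_sx sset_closed[OF X] quotientI)
  next
    fix n c assume "c \<in> sx (quot X R) n"
    with cls obtain x where x: "x \<in> sx X n" and "c = R n `` {x}" by blast
    then show "sop (quot X R) n n id c = c"
      by (simp add: quot_sop[OF R _ opr_id] sset_id[OF X])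
  next
    fix n m k \<alpha> \<beta> c assume \<alpha>: "opr m n \<alpha>" and \<beta>: "opr k m \<beta>" and "c \<in> sx (quot X R) n"
    with cls obtain x where x: "x \<in> sx X n" and "c = R n `` {x}" by blast
    then show "sop (quot X R) m k \<beta> (sop (quot X R) n m \<alpha> c) = sop (quot X R) n k (\<alpha> \<circ> \<beta>) c"
      using \<alpha> \<beta> opr_comp[OF \<beta> \<alpha>]
      by (simp add: quot_sop[OF R] sset_closed[OF X] sset_comp[OF X])
  qed (rule cong)
qed

definition ker :: "'a sset \<Rightarrow> (nat \<Rightarrow> 'a \<Rightarrow> 'b) \<Rightarrow> nat \<Rightarrow> ('a \<times> 'a) set" where
  "ker X f n = {(x, x'). x \<in> sx X n \<and> x' \<in> sx X n \<and> f n x = f n x'}"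

lemma qrel_ker:
  assumes X: "sset X" and f: "smap X Y f"
  shows "qrel X (ker X f)"
  unfolding qrel_def
proof (intro conjI allI impI)
  show "equiv (sx X n) (ker X f n)" for n
    by (rule equivI) (auto simp: ker_def refl_on_def sym_def trans_def)
  show "(sop X n m \<alpha> x, sop X n m \<alpha> y) \<in> ker X f m"
    if "opr m n \<alpha>" "(x, y) \<in> ker X f n" for n m \<alpha> x y
    using that by (auto simp: ker_def sset_closed[OF X] smap_sop[OF f])
qed

lemma nonsingular_quot_ker:
  assumes X: "sset X" and f: "smap X Y f" and f_surj: "\<And>n. f n ` sx X n = sx Y n"
    and Y: "nonsingular Y"
  shows "nonsingular (quot X (ker X f))"
  unfolding nonsingular_def
proof clarify
  let ?K = "ker X f" and ?Z = "quot X (ker X f)"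
  have K: "qrel X ?K" using X f by (rule qrel_ker)
  fix n c k assume "(n, c) \<in> nondeg ?Z"
  then have c: "c \<in> sx X n // ?K n" and c_nondeg: "\<not> degenerate ?Z n c"
    unfolding nondeg_def quot_sx by simp_all
  from c obtain x where x: "x \<in> sx X n" and c_eq: "c = ?K n `` {x}" by (elim quotientE)
  have "\<not> degenerate Y n (f n x)"
  proof
    assume "degenerate Y n (f n x)"
    then obtain m \<sigma> y where m: "m < n" and \<sigma>: "opr n m \<sigma>" "\<sigma> ` {0..n} = {0..m}"
      and y: "y \<in> sx Y m" and fx: "f n x = sop Y m n \<sigma> y"
      unfolding degenerate_def by blast
    from y obtain x' where x': "x' \<in> sx X m" and y_eq: "y = f m x'" using f_surj by blast
    have "(x, sop X m n \<sigma> x') \<in> ?K n"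
      using x x' fx y_eq by (simp add: ker_def sset_closed[OF X \<sigma>(1)] smap_sop[OF f \<sigma>(1)])
    then have "c = sop ?Z m n \<sigma> (?K m `` {x'})"
      unfolding c_eq quot_sop[OF K x' \<sigma>(1)] by (rule equiv_class_eq[OF qrel_equiv[OF K]])
    moreover have "?K m `` {x'} \<in> sx ?Z m" unfolding quot_sx using x' by (rule quotientI)
    ultimately have "degenerate ?Z n c" unfolding degenerate_def using m \<sigma> by blast
    with c_nondeg show False ..
  qed
  then have "(n, f n x) \<in> nondeg Y" unfolding nondeg_def using smap_in[OF f x] by simp
  then have inj_Y: "inj_on (\<lambda>\<alpha>. sop Y n k \<alpha> (f n x)) (sx (delta n) k)"
    using Y unfolding nonsingular_def by blast
  show "inj_on (\<lambda>\<alpha>. sop ?Z n k \<alpha> c) (sx (delta n) k)"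
  proof (rule inj_onI)
    fix \<alpha> \<alpha>' assume \<alpha>: "\<alpha> \<in> sx (delta n) k" and \<alpha>': "\<alpha>' \<in> sx (delta n) k"
      and eq: "sop ?Z n k \<alpha> c = sop ?Z n k \<alpha>' c"
    note opr = opr_of_delta[OF \<alpha>] opr_of_delta[OF \<alpha>']
    have "(sop X n k \<alpha> x, sop X n k \<alpha>' x) \<in> ?K k"
      using eq unfolding c_eq quot_sop[OF K x opr(1)] quot_sop[OF K x opr(2)]
      by (rule eq_equiv_class[OF _ qrel_equiv[OF K] sset_closed[OF X opr(2) x]])
    then have "sop Y n k \<alpha> (f n x) = sop Y n k \<alpha>' (f n x)"
      by (simp add: ker_def smap_sop[OF f _ x] opr)
    then show "\<alpha> = \<alpha>'" by (rule inj_onD[OF inj_Y _ \<alpha> \<alpha>'])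
  qed
qed

section \<open>Non-degenerate simplices and non-singular simplicial sets\<close>

lemma sx_factor_nondeg:
  assumes Z: "sset Z" and z: "z \<in> sx Z n"
  obtains m \<sigma> d where "opr n m \<sigma>" "(m, d) \<in> nondeg Z" "z = sop Z m n \<sigma> d"
  using z
proof (induction n arbitrary: z thesis rule: less_induct)
  case (less n)
  show ?case
  proof (cases "degenerate Z n z")
    case False
    then show ?thesis
      using less.prems opr_id sset_id[OF Z] unfolding nondeg_def by fastforce
  next
    case True
    then obtain m \<sigma> y where m: "m < n" and \<sigma>: "opr n m \<sigma>" and y: "y \<in> sx Z m"
      and z_eq: "z = sop Z m n \<sigma> y"
      unfolding degenerate_def by blast
    obtain m' \<tau> d where \<tau>: "opr m m' \<tau>" and d: "(m', d) \<in> nondeg Z" and y_eq: "y = sop Z m' m \<tau> d"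
      using less.IH[OF m _ y] by blast
    have "z = sop Z m' n (\<tau> \<circ> \<sigma>) d"
      unfolding z_eq y_eq using Z \<tau> \<sigma> d by (simp add: sset_comp nondeg_def)
    then show ?thesis using less.prems(1) opr_comp[OF \<sigma> \<tau>] d by blast
  qed
qed

lemma nonsingular_vertex_inj:
  assumes Z: "sset Z" "nonsingular Z" and d: "(m, d) \<in> nondeg Z" and "a \<le> m" "b \<le> m"
    and eq: "sop Z m 0 (\<lambda>_. a) d = sop Z m 0 (\<lambda>_. b) d"
  shows "a = b"
proof -
  have d_in: "d \<in> sx Z m" using d unfolding nondeg_def by simp
  have vertex: "sop Z m 0 (\<lambda>_. v) d = sop Z m 0 (cut 0 (\<lambda>_. v)) d" for v
    using Z(1) _ d_in by (rule sset_cong) (simp add: cut_def)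
  have inj: "inj_on (\<lambda>\<alpha>. sop Z m 0 \<alpha> d) (sx (delta m) 0)"
    using Z(2) d unfolding nonsingular_def by blast
  have "cut 0 (\<lambda>_. a) = cut 0 (\<lambda>_. b)"
    by (rule inj_onD[OF inj])
      (use eq[unfolded vertex] assms(4,5) in \<open>simp_all add: cut_in_delta opr_const\<close>)
  from fun_cong[OF this, of 0] show ?thesis by (simp add: cut_def)
qed

lemma opr_eq_on_eeq:
  assumes \<sigma>: "opr n m \<sigma>" and esim: "\<And>i j. i \<le> n \<Longrightarrow> j \<le> n \<Longrightarrow> esim Z n z i j \<Longrightarrow> \<sigma> i = \<sigma> j"
    and ab: "(a, b) \<in> eeq Z n z"
  shows "\<sigma> a = \<sigma> b"
proof -
  have "\<sigma> i = \<sigma> k" if "(i, k) \<in> eapprox Z n z" for i k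
  proof -
    from that obtain j where ij: "i \<le> k" "k \<le> j" "j \<le> n" "esim Z n z i j"
      unfolding eapprox_def by blast
    have "\<sigma> i \<le> \<sigma> k" "\<sigma> k \<le> \<sigma> j" using opr_mono[OF \<sigma>] ij by auto
    moreover have "\<sigma> i = \<sigma> j" using ij by (intro esim) auto
    ultimately show ?thesis by linarith
  qed
  then show ?thesis using ab unfolding eeq_def by (rule rtrancl_Un_converse_invariant)
qed

lemma nonsingular_sop_eq_of_eeq:
  assumes Z: "sset Z" "nonsingular Z" and z: "z \<in> sx Z n"
    and \<alpha>: "opr k n \<alpha>" and \<alpha>': "opr k n \<alpha>'" and eeq: "\<And>i. i \<le> k \<Longrightarrow> (\<alpha> i, \<alpha>' i) \<in> eeq Z n z"
  shows "sop Z n k \<alpha> z = sop Z n k \<alpha>' z"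
proof -
  obtain m \<sigma> d where \<sigma>: "opr n m \<sigma>" and d: "(m, d) \<in> nondeg Z" and z_eq: "z = sop Z m n \<sigma> d"
    using sx_factor_nondeg[OF Z(1) z] .
  have d_in: "d \<in> sx Z m" using d unfolding nondeg_def by simp
  have \<sigma>_esim: "\<sigma> i = \<sigma> j" if "i \<le> n" "j \<le> n" "esim Z n z i j" for i j
  proof (rule nonsingular_vertex_inj[OF Z d])
    show "\<sigma> i \<le> m" "\<sigma> j \<le> m" using that opr_le[OF \<sigma>] by auto
    show "sop Z m 0 (\<lambda>_. \<sigma> i) d = sop Z m 0 (\<lambda>_. \<sigma> j) d"
      using that sset_comp[OF Z(1) \<sigma> opr_const d_in]
      unfolding esim_def z_eq by (simp add: comp_def)
  qed
  have "sop Z n k \<alpha> z = sop Z m k (\<sigma> \<circ> \<alpha>) d"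
    unfolding z_eq by (rule sset_comp[OF Z(1) \<sigma> \<alpha> d_in])
  also have "\<dots> = sop Z m k (\<sigma> \<circ> \<alpha>') d"
    using Z(1) _ d_in by (rule sset_cong) (simp add: opr_eq_on_eeq[OF \<sigma> \<sigma>_esim eeq])
  also have "\<dots> = sop Z n k \<alpha>' z"
    unfolding z_eq by (rule sset_comp[OF Z(1) \<sigma> \<alpha>' d_in, symmetric])
  finally show ?thesis .
qed

lemma eeq_subset_smap:
  assumes f: "smap X Z f" and x: "x \<in> sx X n"
  shows "eeq X n x \<subseteq> eeq Z n (f n x)"
proof -
  have "esim Z n (f n x) i j" if "i \<le> n" "j \<le> n" "esim X n x i j" for i j
    using that unfolding esim_def by (simp add: smap_sop[OF f opr_const x, symmetric])
  then have "eapprox X n x \<subseteq> eapprox Z n (f n x)"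
    unfolding eapprox_def by (auto intro: order.trans)
  then show ?thesis unfolding eeq_def by (intro rtrancl_mono) blast
qed

section \<open>The enforcer\<close>

lemma equiv_eeq: "equiv UNIV (eeq X n x)"
  unfolding eeq_def
  by (rule equivI) (auto simp: refl_on_def intro: sym_rtrancl trans_rtrancl sym_Un_converse)

lemma eeq_bounded: "(a, b) \<in> eeq X n x \<Longrightarrow> a = b \<or> a \<le> n \<and> b \<le> n"
  unfolding eeq_def
  by (induction rule: rtrancl_induct) (auto simp: eapprox_def)

lemma eeq_of_esim:
  assumes "i \<le> a" "a \<le> j" "i \<le> b" "b \<le> j" "j \<le> n" "esim X n x i j"
  shows "(a, b) \<in> eeq X n x"
proof -
  have "(i, a) \<in> eapprox X n x" "(i, b) \<in> eapprox X n x"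
    using assms unfolding eapprox_def by blast+
  then have "(a, i) \<in> eeq X n x" "(i, b) \<in> eeq X n x"
    unfolding eeq_def by blast+
  then show ?thesis unfolding eeq_def by (rule rtrancl_trans)
qed

lemma eeq_bridged:
  assumes ab: "(a, b) \<in> eeq X n x" and "a < t" "t \<le> b"
  obtains i j where "i < t" "t \<le> j" "j \<le> n" "esim X n x i j"
proof (rule ccontr)
  note bridge = that
  assume no_bridge: "\<not> thesis"
  have "(y < t) = (z < t)" if yz: "(y, z) \<in> eapprox X n x" for y z
  proof -
    obtain j where j: "y \<le> z" "z \<le> j" "j \<le> n" "esim X n x y j"
      using yz unfolding eapprox_def by blast
    show ?thesis
    proof (rule ccontr)
      assume "(y < t) \<noteq> (z < t)"
      with j have thesis by (intro bridge[of y j]) auto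
      with no_bridge show False ..
    qed
  qed
  then have "(a < t) = (b < t)" using ab unfolding eeq_def by (rule rtrancl_Un_converse_invariant)
  with \<open>a < t\<close> \<open>t \<le> b\<close> show False by simp
qed

lemma eclass_in_eclasses: "a \<le> n \<Longrightarrow> eeq X n x `` {a} \<in> eclasses X n x"
  unfolding eclasses_def by (auto intro: quotientI)

lemma eclassesE:
  assumes "c \<in> eclasses X n x"
  obtains a where "a \<le> n" "c = eeq X n x `` {a}"
  using assms unfolding eclasses_def by (auto elim: quotientE)

lemma eclass_self: "a \<in> eeq X n x `` {a}"
  using equiv_eeq by (rule equiv_class_self) simp

lemma eclass_eq: "j \<in> eeq X n x `` {a} \<Longrightarrow> eeq X n x `` {a} = eeq X n x `` {j}"
  by (metis equiv_class_eq[OF equiv_eeq] Image_singleton_iff)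

definition eclasses_below :: "'a sset \<Rightarrow> nat \<Rightarrow> 'a \<Rightarrow> nat \<Rightarrow> nat set set" where
  "eclasses_below X n x i = {c \<in> eclasses X n x. \<forall>j\<in>c. j < i}"

lemma rho_eq_card: "i \<le> n \<Longrightarrow> rho X n x i = card (eclasses_below X n x i)"
  unfolding rho_def eclasses_below_def by simp

lemma finite_eclasses_below: "finite (eclasses_below X n x i)"
  unfolding eclasses_below_def eclasses_def quotient_def by simp

lemma rho_mono:
  assumes "i \<le> j" "j \<le> n"
  shows "rho X n x i \<le> rho X n x j"
proof -
  have "eclasses_below X n x i \<subseteq> eclasses_below X n x j"
    using assms(1) unfolding eclasses_below_def by auto
  then have "card (eclasses_below X n x i) \<le> card (eclasses_below X n x j)"
    by (rule card_mono[OF finite_eclasses_below])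
  then show ?thesis using assms rho_eq_card[of i n X x] rho_eq_card[of j n X x] by simp
qed

lemma rho_zero: "rho X n x 0 = 0"
proof -
  have "c \<notin> eclasses_below X n x 0" for c
  proof
    assume "c \<in> eclasses_below X n x 0"
    then obtain a where "c = eeq X n x `` {a}" "\<forall>j\<in>c. j < 0"
      unfolding eclasses_below_def by (blast elim: eclassesE)
    with eclass_self[of a X n x] show False by simp
  qed
  then have "eclasses_below X n x 0 = {}" by blast
  then show ?thesis by (simp add: rho_eq_card)
qed

lemma rho_last: "rho X n x n = mdeg X n x"
proof -
  let ?c = "eeq X n x `` {n}"
  have "eclasses_below X n x n = eclasses X n x - {?c}"
  proof (intro equalityI subsetI)
    fix c assume "c \<in> eclasses_below X n x n"
    then show "c \<in> eclasses X n x - {?c}"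
      using eclass_self[of n X n x] unfolding eclasses_below_def by blast
  next
    fix c assume c: "c \<in> eclasses X n x - {?c}"
    then obtain a where a: "a \<le> n" "c = eeq X n x `` {a}" by (blast elim: eclassesE)
    have "j < n" if "j \<in> c" for j
    proof -
      have "j \<le> n" using eeq_bounded[of a j X n x] that a by auto
      moreover have "j \<noteq> n" using that c a eclass_eq[of n X n x a] by blast
      ultimately show "j < n" by simp
    qed
    then show "c \<in> eclasses_below X n x n" using c unfolding eclasses_below_def by blast
  qed
  moreover have "?c \<in> eclasses X n x" by (simp add: eclass_in_eclasses)
  ultimately show ?thesis
    unfolding rho_eq_card[OF order.refl] mdeg_def by (simp add: card_Diff_singleton)
qed

lemma rho_le_mdeg: "i \<le> n \<Longrightarrow> rho X n x i \<le> mdeg X n x"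
  using rho_mono[of i n n X x] unfolding rho_last by simp

lemma rho_Suc_le:
  assumes "i < n"
  shows "rho X n x (Suc i) \<le> Suc (rho X n x i)"
proof -
  have "eclasses_below X n x (Suc i) \<subseteq> insert (eeq X n x `` {i}) (eclasses_below X n x i)"
  proof
    fix c assume c: "c \<in> eclasses_below X n x (Suc i)"
    then obtain a where c_eq: "c = eeq X n x `` {a}"
      unfolding eclasses_below_def by (blast elim: eclassesE)
    show "c \<in> insert (eeq X n x `` {i}) (eclasses_below X n x i)"
    proof (cases "i \<in> c")
      case True
      then show ?thesis using c_eq eclass_eq[of i X n x a] by simp
    next
      case False
      then show ?thesis using c unfolding eclasses_below_def less_Suc_eq by blast
    qed
  qed
  then have "card (eclasses_below X n x (Suc i))
      \<le> card (insert (eeq X n x `` {i}) (eclasses_below X n x i))"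
    by (simp add: card_mono finite_eclasses_below)
  also have "\<dots> \<le> Suc (card (eclasses_below X n x i))"
    by (simp add: card_insert_if finite_eclasses_below)
  finally show ?thesis using assms rho_eq_card[of i n X x] rho_eq_card[of "Suc i" n X x] by simp
qed

lemma eeq_Suc_of_rho_eq:
  assumes i: "i < n" and eq: "rho X n x (Suc i) = rho X n x i"
  shows "(i, Suc i) \<in> eeq X n x"
proof (rule ccontr)
  assume not_eeq: "(i, Suc i) \<notin> eeq X n x"
  let ?c = "eeq X n x `` {i}"
  have "d < Suc i" if d: "d \<in> ?c" for d
  proof (rule ccontr)
    assume "\<not> d < Suc i"
    then have "Suc i \<le> d" by simp
    moreover from d have "(i, d) \<in> eeq X n x" by simp
    ultimately obtain i' j where "i' < Suc i" "Suc i \<le> j" "j \<le> n" "esim X n x i' j"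
      using eeq_bridged[of i d X n x "Suc i"] by blast
    then have "(i, Suc i) \<in> eeq X n x" by (intro eeq_of_esim[of i' _ j]) auto
    with not_eeq show False ..
  qed
  then have "?c \<in> eclasses_below X n x (Suc i)"
    using i unfolding eclasses_below_def by (simp add: eclass_in_eclasses)
  moreover have "?c \<notin> eclasses_below X n x i"
    using eclass_self[of i X n x] unfolding eclasses_below_def by blast
  moreover have "eclasses_below X n x i \<subseteq> eclasses_below X n x (Suc i)"
    unfolding eclasses_below_def by auto
  ultimately have "card (eclasses_below X n x i) < card (eclasses_below X n x (Suc i))"
    by (intro psubset_card_mono finite_eclasses_below) blast
  then show False using eq i rho_eq_card[of i n X x] rho_eq_card[of "Suc i" n X x] by simp
qed

lemma eeq_of_rho_eq:
  assumes "a \<le> n" "b \<le> n" "rho X n x a = rho X n x b"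
  shows "(a, b) \<in> eeq X n x"
proof -
  have le_case: "(a, b) \<in> eeq X n x"
    if "a \<le> b" "b \<le> n" "rho X n x a = rho X n x b" for a b
    using that
  proof (induction b rule: dec_induct)
    case base
    then show ?case using eclass_self by simp
  next
    case (step k)
    have "rho X n x a \<le> rho X n x k" "rho X n x k \<le> rho X n x (Suc k)"
      using step.hyps step.prems(1) by (intro rho_mono; simp)+
    then have "rho X n x k = rho X n x a" "rho X n x (Suc k) = rho X n x k"
      using step.prems(2) by linarith+
    then have "(a, k) \<in> eeq X n x" "(k, Suc k) \<in> eeq X n x"
      using step by (auto intro: eeq_Suc_of_rho_eq)
    then show ?case unfolding eeq_def by (rule rtrancl_trans)
  qed
  show ?thesis
  proof (cases "a \<le> b")
    case True
    then show ?thesis using assms by (intro le_case)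
  next
    case False
    then have "(b, a) \<in> eeq X n x" using assms by (intro le_case) auto
    then show ?thesis using equiv_eeq[of X n x] unfolding equiv_def by (blast dest: symD)
  qed
qed

lemma rho_surj:
  assumes "v \<le> mdeg X n x"
  obtains t where "t \<le> n" "rho X n x t = v"
proof -
  have "\<exists>t. 0 \<le> t \<and> t \<le> n \<and> int (rho X n x t) = int v"
  proof (rule nat_intermed_int_val[where f = "\<lambda>t. int (rho X n x t)"])
    show "\<forall>i. 0 \<le> i \<and> i < n \<longrightarrow> \<bar>int (rho X n x (Suc i)) - int (rho X n x i)\<bar> \<le> 1"
    proof (intro allI impI)
      fix i assume "0 \<le> i \<and> i < n"
      then show "\<bar>int (rho X n x (Suc i)) - int (rho X n x i)\<bar> \<le> 1"
        using rho_Suc_le[of i n X x] rho_mono[of i "Suc i" n X x] by simp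
    qed
    show "int (rho X n x 0) \<le> int v" by (simp add: rho_zero)
    show "int v \<le> int (rho X n x n)" using assms by (simp add: rho_last)
  qed simp
  then show thesis using that by auto
qed

definition rho_sect :: "'a sset \<Rightarrow> nat \<Rightarrow> 'a \<Rightarrow> nat \<Rightarrow> (nat \<Rightarrow> nat) \<Rightarrow> nat \<Rightarrow> nat" where
  "rho_sect X n x k \<beta> = cut k (\<lambda>i. LEAST t. rho X n x t = \<beta> i)"

lemma
  assumes \<beta>: "\<beta> \<in> sx (delta (mdeg X n x)) k"
  shows rho_sect_in_delta: "rho_sect X n x k \<beta> \<in> sx (delta n) k"
    and rho_rho_sect: "i \<le> k \<Longrightarrow> rho X n x (rho_sect X n x k \<beta> i) = \<beta> i"
proof -
  let ?t = "\<lambda>i. LEAST t. rho X n x t = \<beta> i"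
  have t: "rho X n x (?t i) = \<beta> i" "?t i \<le> n" if i: "i \<le> k" for i
  proof -
    obtain t where "t \<le> n" "rho X n x t = \<beta> i"
      by (rule rho_surj[OF opr_le[OF opr_of_delta[OF \<beta>] i]])
    from \<open>rho X n x t = \<beta> i\<close> show "rho X n x (?t i) = \<beta> i" by (rule LeastI)
    from \<open>rho X n x t = \<beta> i\<close> have "?t i \<le> t" by (rule Least_le)
    with \<open>t \<le> n\<close> show "?t i \<le> n" by simp
  qed
  have mono: "?t i \<le> ?t j" if ij: "i \<le> j" "j \<le> k" for i j
  proof (rule ccontr)
    assume "\<not> ?t i \<le> ?t j"
    have "rho X n x (?t j) \<le> rho X n x (?t i)"
      using \<open>\<not> ?t i \<le> ?t j\<close> t(2)[of i] ij by (intro rho_mono) auto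
    moreover have "\<beta> i \<le> \<beta> j" by (rule opr_mono[OF opr_of_delta[OF \<beta>] ij])
    ultimately have "\<beta> i = \<beta> j" using t(1)[of i] t(1)[of j] ij by simp
    with \<open>\<not> ?t i \<le> ?t j\<close> show False by simp
  qed
  have "opr k n ?t" unfolding opr_def using t(2) mono by blast
  then show "rho_sect X n x k \<beta> \<in> sx (delta n) k"
    unfolding rho_sect_def by (rule cut_in_delta)
  show "rho X n x (rho_sect X n x k \<beta> i) = \<beta> i" if "i \<le> k"
    using t(1)[OF that] that by (simp add: rho_sect_def cut_def)
qed

lemma cut_rho_comp_in_delta:
  assumes "\<alpha> \<in> sx (delta n) k"
  shows "cut k (rho X n x \<circ> \<alpha>) \<in> sx (delta (mdeg X n x)) k"
proof (rule cut_in_delta)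
  have \<alpha>: "opr k n \<alpha>" by (rule opr_of_delta[OF assms])
  show "opr k (mdeg X n x) (rho X n x \<circ> \<alpha>)"
    unfolding opr_def comp_def
    using opr_le[OF \<alpha>] opr_mono[OF \<alpha>] by (auto intro: rho_le_mdeg rho_mono)
qed

lemma desing_sx: "sx (desing X) n = eta X n ` sx X n"
  unfolding desing_def by simp

lemma desing_sop:
  assumes X: "sset X" and x: "x \<in> sx X n" and \<alpha>: "opr m n \<alpha>"
  shows "sop (desing X) n m \<alpha> (eta X n x) = eta X m (sop X n m \<alpha> x)"
proof (rule ext)
  fix R
  show "sop (desing X) n m \<alpha> (eta X n x) R = eta X m (sop X n m \<alpha> x) R"
    using quot_sop[OF _ x \<alpha>, of R] by (simp add: desing_def eta_def goodrel_def)
qed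

lemma eta_sop_eq_of_rho_eq:
  assumes X: "sset X" and x: "x \<in> sx X n" and \<alpha>: "opr k n \<alpha>" and \<alpha>': "opr k n \<alpha>'"
    and rho: "\<And>i. i \<le> k \<Longrightarrow> rho X n x (\<alpha> i) = rho X n x (\<alpha>' i)"
  shows "eta X k (sop X n k \<alpha> x) = eta X k (sop X n k \<alpha>' x)"
proof (rule ext)
  fix R
  show "eta X k (sop X n k \<alpha> x) R = eta X k (sop X n k \<alpha>' x) R"
  proof (cases "goodrel X R")
    case True
    then have R: "qrel X R" and Z: "nonsingular (quot X R)" unfolding goodrel_def by simp_all
    have "(\<alpha> i, \<alpha>' i) \<in> eeq (quot X R) n (R n `` {x})" if "i \<le> k" for i
      using eeq_subset_smap[OF smap_quot[OF X R] x]
        eeq_of_rho_eq[OF opr_le[OF \<alpha> that] opr_le[OF \<alpha>' that] rho[OF that]] by auto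
    then have "sop (quot X R) n k \<alpha> (R n `` {x}) = sop (quot X R) n k \<alpha>' (R n `` {x})"
      using x by (intro nonsingular_sop_eq_of_eeq[OF sset_quot[OF X R] Z _ \<alpha> \<alpha>'])
        (simp_all add: quot_sx quotientI)
    with True show ?thesis by (simp add: eta_def quot_sop[OF R x \<alpha>] quot_sop[OF R x \<alpha>'])
  next
    case False
    then show ?thesis by (simp add: eta_def)
  qed
qed

lemma eq_of_eta_eq:
  assumes X: "sset X" and f: "smap X Y f" and f_surj: "\<And>n. f n ` sx X n = sx Y n"
    and Y: "nonsingular Y" and x: "x \<in> sx X n" and x': "x' \<in> sx X n"
    and eq: "eta X n x = eta X n x'"
  shows "f n x = f n x'"
proof -
  have K: "qrel X (ker X f)" using X f by (rule qrel_ker)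
  have "goodrel X (ker X f)"
    unfolding goodrel_def using K nonsingular_quot_ker[OF X f f_surj Y] by simp
  then have "ker X f n `` {x} = ker X f n `` {x'}"
    using fun_cong[OF eq, of "ker X f"] by (simp add: eta_def)
  then have "(x, x') \<in> ker X f n" by (rule eq_equiv_class[OF _ qrel_equiv[OF K] x'])
  then show ?thesis by (simp add: ker_def)
qed

section \<open>Pushouts\<close>

definition po_gen :: "'c sset \<Rightarrow> (nat \<Rightarrow> 'c \<Rightarrow> 'b) \<Rightarrow> (nat \<Rightarrow> 'c \<Rightarrow> 'a) \<Rightarrow> nat
    \<Rightarrow> (('b + 'a) \<times> ('b + 'a)) set" where
  "po_gen C g f n = {(Inl (g n c), Inr (f n c)) | c. c \<in> sx C n}"

lemma po_rel_eq:
  "po_rel B C X g f n = (po_gen C g f n \<union> (po_gen C g f n)\<inverse>)\<^sup>*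
      \<inter> ((sx B n <+> sx X n) \<times> (sx B n <+> sx X n))"
  unfolding po_rel_def po_gen_def Let_def ..

lemma equiv_po_rel:
  assumes g: "smap C B g" and f: "smap C X f"
  shows "equiv (sx B n <+> sx X n) (po_rel B C X g f n)"
  unfolding po_rel_eq
proof (rule equivI)
  let ?D = "sx B n <+> sx X n" and ?G = "po_gen C g f n"
  show "refl_on ?D ((?G \<union> ?G\<inverse>)\<^sup>* \<inter> ?D \<times> ?D)" unfolding refl_on_def by blast
  show "sym ((?G \<union> ?G\<inverse>)\<^sup>* \<inter> ?D \<times> ?D)"
    by (intro sym_Int sym_rtrancl sym_Un_converse) (auto simp: sym_def)
  show "trans ((?G \<union> ?G\<inverse>)\<^sup>* \<inter> ?D \<times> ?D)"
    by (intro trans_Int trans_rtrancl) (auto simp: trans_def)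
qed blast

lemma po_gen_in_po_rel:
  assumes "smap C B g" "smap C X f" "c \<in> sx C n"
  shows "(Inl (g n c), Inr (f n c)) \<in> po_rel B C X g f n"
  using assms unfolding po_rel_eq po_gen_def by (auto simp: smap_in)

lemma map_sum_sop_in:
  assumes "sset B" "sset X" "opr m n \<alpha>" "u \<in> sx B n <+> sx X n"
  shows "map_sum (sop B n m \<alpha>) (sop X n m \<alpha>) u \<in> sx B m <+> sx X m"
  using assms by (auto simp: sset_closed)

lemma po_rel_sop:
  assumes B: "sset B" and C: "sset C" and X: "sset X" and g: "smap C B g" and f: "smap C X f"
    and \<alpha>: "opr m n \<alpha>" and uv: "(u, v) \<in> po_rel B C X g f n"
  shows "(map_sum (sop B n m \<alpha>) (sop X n m \<alpha>) u, map_sum (sop B n m \<alpha>) (sop X n m \<alpha>) v)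
    \<in> po_rel B C X g f m"
proof -
  let ?h = "map_sum (sop B n m \<alpha>) (sop X n m \<alpha>)"
  have "(?h y, ?h z) \<in> po_gen C g f m" if "(y, z) \<in> po_gen C g f n" for y z
  proof -
    from that obtain c where c: "c \<in> sx C n" and "y = Inl (g n c)" "z = Inr (f n c)"
      unfolding po_gen_def by blast
    then have "?h y = Inl (g m (sop C n m \<alpha> c))" "?h z = Inr (f m (sop C n m \<alpha> c))"
      by (simp_all add: smap_sop[OF g \<alpha> c] smap_sop[OF f \<alpha> c])
    then show ?thesis unfolding po_gen_def using sset_closed[OF C \<alpha> c] by blast
  qed
  then show ?thesis
    using uv rtrancl_Un_converse_map[of "po_gen C g f n" ?h "po_gen C g f m" u v]
    unfolding po_rel_eq by (auto intro: map_sum_sop_in[OF B X \<alpha>])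
qed

lemma pushout_sx: "sx (pushout B C X g f) n = (sx B n <+> sx X n) // po_rel B C X g f n"
  unfolding pushout_def by simp

lemma pushout_sop:
  assumes B: "sset B" and C: "sset C" and X: "sset X" and g: "smap C B g" and f: "smap C X f"
    and \<alpha>: "opr m n \<alpha>" and u: "u \<in> sx B n <+> sx X n"
  shows "sop (pushout B C X g f) n m \<alpha> (po_rel B C X g f n `` {u})
    = po_rel B C X g f m `` {map_sum (sop B n m \<alpha>) (sop X n m \<alpha>) u}"
proof -
  let ?P = "po_rel B C X g f"
  have "u \<in> ?P n `` {u}" using equiv_po_rel[OF g f] u by (rule equiv_class_self)
  then have "(u, SOME v. v \<in> ?P n `` {u}) \<in> ?P n" by (metis Image_singleton_iff someI)
  from po_rel_sop[OF B C X g f \<alpha> this]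
  have "?P m `` {map_sum (sop B n m \<alpha>) (sop X n m \<alpha>) u}
      = ?P m `` {map_sum (sop B n m \<alpha>) (sop X n m \<alpha>) (SOME v. v \<in> ?P n `` {u})}"
    by (rule equiv_class_eq[OF equiv_po_rel[OF g f]])
  moreover have "(case z of Inl b \<Rightarrow> Inl (sop B n m \<alpha> b) | Inr x \<Rightarrow> Inr (sop X n m \<alpha> x))
      = map_sum (sop B n m \<alpha>) (sop X n m \<alpha>) z" for z
    by (cases z) simp_all
  ultimately show ?thesis unfolding pushout_def by simp
qed

lemma sset_pushout:
  assumes B: "sset B" and C: "sset C" and X: "sset X" and g: "smap C B g" and f: "smap C X f"
  shows "sset (pushout B C X g f)"
proof -
  let ?Y = "pushout B C X g f" and ?P = "po_rel B C X g f"
  have cls: "\<exists>u \<in> sx B n <+> sx X n. c = ?P n `` {u}" if "c \<in> sx ?Y n" for c n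
    using that unfolding pushout_sx by (auto elim: quotientE)
  note sop_cls = pushout_sop[OF B C X g f]
  show ?thesis
    unfolding sset_def
  proof (intro conjI allI impI)
    fix n m \<alpha> c assume \<alpha>: "opr m n \<alpha>" and "c \<in> sx ?Y n"
    with cls obtain u where u: "u \<in> sx B n <+> sx X n" and c: "c = ?P n `` {u}" by blast
    show "sop ?Y n m \<alpha> c \<in> sx ?Y m"
      unfolding c sop_cls[OF \<alpha> u] pushout_sx by (intro quotientI map_sum_sop_in[OF B X \<alpha> u])
  next
    fix n c assume "c \<in> sx ?Y n"
    with cls obtain u where u: "u \<in> sx B n <+> sx X n" and c: "c = ?P n `` {u}" by blast
    have "map_sum (sop B n n id) (sop X n n id) u = u"
      using u by (auto simp: sset_id[OF B] sset_id[OF X])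
    then show "sop ?Y n n id c = c" unfolding c sop_cls[OF opr_id u] by simp
  next
    fix n m k \<alpha> \<beta> c assume \<alpha>: "opr m n \<alpha>" and \<beta>: "opr k m \<beta>" and "c \<in> sx ?Y n"
    with cls obtain u where u: "u \<in> sx B n <+> sx X n" and c: "c = ?P n `` {u}" by blast
    have "map_sum (sop B m k \<beta>) (sop X m k \<beta>) (map_sum (sop B n m \<alpha>) (sop X n m \<alpha>) u)
        = map_sum (sop B n k (\<alpha> \<circ> \<beta>)) (sop X n k (\<alpha> \<circ> \<beta>)) u"
      using u by (auto simp: sset_comp[OF B \<alpha> \<beta>] sset_comp[OF X \<alpha> \<beta>])
    then show "sop ?Y m k \<beta> (sop ?Y n m \<alpha> c) = sop ?Y n k (\<alpha> \<circ> \<beta>) c"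
      unfolding c sop_cls[OF \<alpha> u] sop_cls[OF \<beta> map_sum_sop_in[OF B X \<alpha> u]]
        sop_cls[OF opr_comp[OF \<beta> \<alpha>] u] by simp
  next
    fix n m :: nat and \<alpha> \<alpha>' :: "nat \<Rightarrow> nat" and c
    assume eq: "\<forall>i\<le>m. \<alpha> i = \<alpha>' i" and "c \<in> sx ?Y n"
    with cls obtain u where u: "u \<in> sx B n <+> sx X n" and c: "c = ?P n `` {u}" by blast
    have "u \<in> c" unfolding c using equiv_po_rel[OF g f] u by (rule equiv_class_self)
    then have "(SOME v. v \<in> c) \<in> c" by (rule someI)
    then have v: "(SOME v. v \<in> c) \<in> sx B n <+> sx X n"
      unfolding c po_rel_eq by blast
    have "sop B n m \<alpha> b = sop B n m \<alpha>' b" if "b \<in> sx B n" for b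
      using B _ that by (rule sset_cong) (simp add: eq)
    moreover have "sop X n m \<alpha> y = sop X n m \<alpha>' y" if "y \<in> sx X n" for y
      using X _ that by (rule sset_cong) (simp add: eq)
    ultimately show "sop ?Y n m \<alpha> c = sop ?Y n m \<alpha>' c"
      using v unfolding pushout_def by auto
  qed
qed

definition po_desc :: "(nat \<Rightarrow> 'b \<Rightarrow> 'd) \<Rightarrow> (nat \<Rightarrow> 'a \<Rightarrow> 'd) \<Rightarrow> nat \<Rightarrow> ('b + 'a) set \<Rightarrow> 'd" where
  "po_desc hB hX n y = case_sum (hB n) (hX n) (SOME u. u \<in> y)"

lemma po_desc_class:
  assumes g: "smap C B g" and f: "smap C X f"
    and compat: "\<And>c. c \<in> sx C n \<Longrightarrow> hB n (g n c) = hX n (f n c)"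
    and u: "u \<in> sx B n <+> sx X n"
  shows "po_desc hB hX n (po_rel B C X g f n `` {u}) = case_sum (hB n) (hX n) u"
proof -
  let ?P = "po_rel B C X g f n"
  have "u \<in> ?P `` {u}" using equiv_po_rel[OF g f] u by (rule equiv_class_self)
  then have "(u, SOME v. v \<in> ?P `` {u}) \<in> ?P" by (metis Image_singleton_iff someI)
  then have "(u, SOME v. v \<in> ?P `` {u}) \<in> (po_gen C g f n \<union> (po_gen C g f n)\<inverse>)\<^sup>*"
    unfolding po_rel_eq by blast
  then have "case_sum (hB n) (hX n) u = case_sum (hB n) (hX n) (SOME v. v \<in> ?P `` {u})"
    by (rule rtrancl_Un_converse_invariant[rotated]) (auto simp: po_gen_def compat)
  then show ?thesis unfolding po_desc_def by simp
qed

section \<open>The enforcer pushout\<close>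

lemma sset_enf_B: "sset (enf_B X S)"
  unfolding enf_B_def by (rule sset_coprod_delta)

lemma sset_enf_C: "sset (enf_C S)"
  unfolding enf_C_def by (rule sset_coprod_delta)

lemma smap_enf_g: "smap (enf_C S) (enf_B X S) (enf_g X)"
  unfolding smap_def
proof (intro conjI allI impI)
  fix n c assume "c \<in> sx (enf_C S) n"
  then show "enf_g X n c \<in> sx (enf_B X S) n"
    by (auto simp: enf_C_def enf_B_def coprod_delta_def enf_g_def cut_rho_comp_in_delta)
next
  fix n m \<beta> c assume \<beta>: "opr m n \<beta>"
  have "cut m (h \<circ> cut m (\<alpha> \<circ> \<beta>)) = cut m (cut n (h \<circ> \<alpha>) \<circ> \<beta>)" for h \<alpha> :: "nat \<Rightarrow> nat"
    unfolding cut_comp_cut[OF \<beta>] by (rule cut_cong) (simp add: cut_def)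
  then show "enf_g X m (sop (enf_C S) n m \<beta> c) = sop (enf_B X S) n m \<beta> (enf_g X n c)"
    by (simp add: enf_C_def enf_B_def coprod_delta_def enf_g_def split: prod.split)
qed

lemma smap_enf_f:
  assumes X: "sset X" and S: "S \<subseteq> nondeg X"
  shows "smap (enf_C S) X (enf_f X)"
  unfolding smap_def
proof (intro conjI allI impI)
  fix n c assume "c \<in> sx (enf_C S) n"
  then obtain s \<alpha> where c: "c = (s, \<alpha>)" "s \<in> S" "\<alpha> \<in> sx (delta (fst s)) n"
    by (auto simp: enf_C_def coprod_delta_def)
  then have s: "snd s \<in> sx X (fst s)" using S by (auto simp: nondeg_def)
  note \<alpha> = opr_of_delta[OF c(3)]
  show "enf_f X n c \<in> sx X n"
    unfolding c enf_f_def using sset_closed[OF X \<alpha> s] by simp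
  fix m \<beta> assume \<beta>: "opr m n \<beta>"
  have "sop X (fst s) m (cut m (\<alpha> \<circ> \<beta>)) (snd s) = sop X (fst s) m (\<alpha> \<circ> \<beta>) (snd s)"
    using X _ s by (rule sset_cong) (simp add: cut_def)
  also have "\<dots> = sop X n m \<beta> (sop X (fst s) n \<alpha> (snd s))"
    by (rule sset_comp[OF X \<alpha> \<beta> s, symmetric])
  finally show "enf_f X m (sop (enf_C S) n m \<beta> c) = sop X n m \<beta> (enf_f X n c)"
    unfolding c enf_f_def enf_C_def coprod_delta_def by simp
qed

text \<open>On the copy of \<open>\<Delta>[m_s]\<close> the map to \<open>DX\<close> is forced: \<open>\<beta>\<close> must go to \<open>\<eta>(s \<gamma>)\<close> for a lift
  \<open>\<gamma>\<close> of \<open>\<beta>\<close> along \<open>\<rho>_s\<close>. By \<open>eta_sop_eq_of_rho_eq\<close> the choice of the lift does not matter, and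
  this is what makes \<open>enf_p\<close> constant on the classes of the pushout.\<close>
definition enf_eta_B :: "'a sset \<Rightarrow> nat \<Rightarrow> (nat \<times> 'a) \<times> (nat \<Rightarrow> nat)
    \<Rightarrow> (nat \<Rightarrow> ('a \<times> 'a) set) \<Rightarrow> 'a set" where
  "enf_eta_B X k b = (case b of (s, \<beta>) \<Rightarrow>
     eta X k (sop X (fst s) k (rho_sect X (fst s) (snd s) k \<beta>) (snd s)))"

definition enf_p :: "'a sset \<Rightarrow> nat \<Rightarrow> (((nat \<times> 'a) \<times> (nat \<Rightarrow> nat)) + 'a) set
    \<Rightarrow> (nat \<Rightarrow> ('a \<times> 'a) set) \<Rightarrow> 'a set" where
  "enf_p X = po_desc (enf_eta_B X) (eta X)"

locale enforcer_pushout =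
  fixes X :: "'a sset" and S :: "(nat \<times> 'a) set"
  assumes sset_X: "sset X" and S_nondeg: "S \<subseteq> nondeg X"
begin

lemmas pushout_hyps = sset_enf_B[where X = X and S = S] sset_enf_C[where S = S] sset_X
  smap_enf_g[where X = X and S = S] smap_enf_f[OF sset_X S_nondeg]

lemma sset_enf_Y: "sset (enf_Y X S)"
  unfolding enf_Y_def by (rule sset_pushout[OF pushout_hyps])

lemma enf_q_sop:
  assumes "x \<in> sx X n" "opr m n \<alpha>"
  shows "sop (enf_Y X S) n m \<alpha> (enf_q X S n x) = enf_q X S m (sop X n m \<alpha> x)"
  using pushout_sop[OF pushout_hyps assms(2) InrI[OF assms(1)]]
  by (simp add: enf_Y_def enf_q_def po_inr_def)

lemma enf_q_in: "x \<in> sx X n \<Longrightarrow> enf_q X S n x \<in> sx (enf_Y X S) n"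
  unfolding enf_q_def po_inr_def enf_Y_def pushout_sx by (rule quotientI) (rule InrI)

lemma smap_enf_q: "smap X (enf_Y X S) (enf_q X S)"
  unfolding smap_def using enf_q_in enf_q_sop by simp

lemma enf_q_surj: "enf_q X S n ` sx X n = sx (enf_Y X S) n"
proof
  show "enf_q X S n ` sx X n \<subseteq> sx (enf_Y X S) n" using smap_in[OF smap_enf_q] by blast
  let ?P = "po_rel (enf_B X S) (enf_C S) X (enf_g X) (enf_f X) n"
  show "sx (enf_Y X S) n \<subseteq> enf_q X S n ` sx X n"
  proof
    fix y assume "y \<in> sx (enf_Y X S) n"
    then obtain u where u: "u \<in> sx (enf_B X S) n <+> sx X n" and y: "y = ?P `` {u}"
      unfolding enf_Y_def pushout_sx by (auto elim: quotientE)
    have "\<exists>x \<in> sx X n. (u, Inr x) \<in> ?P"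
    proof (cases u)
      case (Inl b)
      then obtain s \<beta> where b: "b = (s, \<beta>)" "s \<in> S"
        and \<beta>: "\<beta> \<in> sx (delta (mdeg X (fst s) (snd s))) n"
        using u by (auto simp: enf_B_def coprod_delta_def)
      let ?\<gamma> = "rho_sect X (fst s) (snd s) n \<beta>"
      have c: "(s, ?\<gamma>) \<in> sx (enf_C S) n"
        using b(2) rho_sect_in_delta[OF \<beta>] by (simp add: enf_C_def coprod_delta_def)
      have "cut n (rho X (fst s) (snd s) \<circ> ?\<gamma>) = cut n \<beta>"
        by (rule cut_cong) (simp add: rho_rho_sect[OF \<beta>])
      then have "enf_g X n (s, ?\<gamma>) = b" by (simp add: enf_g_def b cut_of_delta[OF \<beta>])
      then show ?thesis
        using po_gen_in_po_rel[OF smap_enf_g smap_enf_f[OF sset_X S_nondeg] c] Inl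
          smap_in[OF smap_enf_f[OF sset_X S_nondeg] c] by auto
    next
      case (Inr x)
      then show ?thesis
        using u equiv_class_self[OF equiv_po_rel[OF smap_enf_g smap_enf_f[OF sset_X S_nondeg]] u]
        by auto
    qed
    then obtain x where "x \<in> sx X n" "(u, Inr x) \<in> ?P" by blast
    moreover from this(2) have "y = enf_q X S n x"
      unfolding y enf_q_def po_inr_def
      by (rule equiv_class_eq[OF equiv_po_rel[OF smap_enf_g smap_enf_f[OF sset_X S_nondeg]]])
    ultimately show "y \<in> enf_q X S n ` sx X n" by blast
  qed
qed

lemma enf_Y_sxE:
  assumes "y \<in> sx (enf_Y X S) n"
  obtains x where "x \<in> sx X n" "y = enf_q X S n x"
  using assms unfolding enf_q_surj[symmetric] by blast

lemma enf_eta_B_enf_g: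
  assumes "c \<in> sx (enf_C S) n"
  shows "enf_eta_B X n (enf_g X n c) = eta X n (enf_f X n c)"
proof -
  obtain s \<alpha> where c: "c = (s, \<alpha>)" "s \<in> S" and \<alpha>: "\<alpha> \<in> sx (delta (fst s)) n"
    using assms by (auto simp: enf_C_def coprod_delta_def)
  let ?\<beta> = "cut n (rho X (fst s) (snd s) \<circ> \<alpha>)"
  have \<beta>: "?\<beta> \<in> sx (delta (mdeg X (fst s) (snd s))) n" by (rule cut_rho_comp_in_delta[OF \<alpha>])
  have "eta X n (sop X (fst s) n (rho_sect X (fst s) (snd s) n ?\<beta>) (snd s))
      = eta X n (sop X (fst s) n \<alpha> (snd s))"
  proof (rule eta_sop_eq_of_rho_eq[OF sset_X])
    show "snd s \<in> sx X (fst s)" using c(2) S_nondeg by (auto simp: nondeg_def)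
    show "opr n (fst s) (rho_sect X (fst s) (snd s) n ?\<beta>)"
      by (rule opr_of_delta[OF rho_sect_in_delta[OF \<beta>]])
    show "opr n (fst s) \<alpha>" by (rule opr_of_delta[OF \<alpha>])
    show "rho X (fst s) (snd s) (rho_sect X (fst s) (snd s) n ?\<beta> i) = rho X (fst s) (snd s) (\<alpha> i)"
      if "i \<le> n" for i
      using rho_rho_sect[OF \<beta> that] that by (simp add: cut_def)
  qed
  then show ?thesis by (simp add: c enf_eta_B_def enf_g_def enf_f_def)
qed

lemma enf_p_q:
  assumes "x \<in> sx X n"
  shows "enf_p X n (enf_q X S n x) = eta X n x"
  unfolding enf_p_def enf_q_def po_inr_def
  using po_desc_class[where hB = "enf_eta_B X" and hX = "eta X",
      OF pushout_hyps(4-5) enf_eta_B_enf_g InrI[OF assms]]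
  by simp

lemma smap_enf_p: "smap (enf_Y X S) (desing X) (enf_p X)"
  unfolding smap_def
proof (intro conjI allI impI)
  fix n y assume "y \<in> sx (enf_Y X S) n"
  then obtain x where x: "x \<in> sx X n" and y: "y = enf_q X S n x" by (rule enf_Y_sxE)
  show "enf_p X n y \<in> sx (desing X) n" unfolding y enf_p_q[OF x] desing_sx using x by blast
  fix m \<alpha> assume \<alpha>: "opr m n \<alpha>"
  show "enf_p X m (sop (enf_Y X S) n m \<alpha> y) = sop (desing X) n m \<alpha> (enf_p X n y)"
    unfolding y enf_q_sop[OF x \<alpha>] enf_p_q[OF x] enf_p_q[OF sset_closed[OF sset_X \<alpha> x]]
      desing_sop[OF sset_X x \<alpha>] ..
qed

lemma enf_p_surj: "enf_p X n ` sx (enf_Y X S) n = sx (desing X) n"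
proof -
  have "enf_p X n ` sx (enf_Y X S) n = enf_p X n ` enf_q X S n ` sx X n"
    by (simp only: enf_q_surj)
  also have "\<dots> = eta X n ` sx X n"
    unfolding image_image by (rule image_cong) (simp_all add: enf_p_q)
  finally show ?thesis unfolding desing_sx .
qed

lemma bij_betw_enf_p:
  assumes "nonsingular (enf_Y X S)"
  shows "bij_betw (enf_p X n) (sx (enf_Y X S) n) (sx (desing X) n)"
  unfolding bij_betw_def
proof
  show "inj_on (enf_p X n) (sx (enf_Y X S) n)"
  proof (rule inj_onI)
    fix y y' assume y: "y \<in> sx (enf_Y X S) n" and y': "y' \<in> sx (enf_Y X S) n"
      and eq: "enf_p X n y = enf_p X n y'"
    obtain x where x: "x \<in> sx X n" "y = enf_q X S n x" using y by (rule enf_Y_sxE)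
    obtain x' where x': "x' \<in> sx X n" "y' = enf_q X S n x'" using y' by (rule enf_Y_sxE)
    show "y = y'"
      using eq_of_eta_eq[OF sset_X smap_enf_q enf_q_surj assms x(1) x'(1)] eq
      unfolding x(2) x'(2) enf_p_q[OF x(1)] enf_p_q[OF x'(1)] by simp
  qed
qed (rule enf_p_surj)

lemma siso_enf_p: "nonsingular (enf_Y X S) \<Longrightarrow> siso (enf_Y X S) (desing X) (enf_p X)"
  by (rule siso_of_bij_betw[OF sset_enf_Y smap_enf_p bij_betw_enf_p])

lemma enf_p_unique:
  assumes p'_q: "\<And>n x. x \<in> sx X n \<Longrightarrow> p' n (enf_q X S n x) = eta X n x"
    and y: "y \<in> sx (enf_Y X S) n"
  shows "p' n y = enf_p X n y"
proof -
  obtain x where "x \<in> sx X n" "y = enf_q X S n x" using y by (rule enf_Y_sxE)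
  with p'_q show ?thesis by (simp add: enf_p_q)
qed

end

theorem mainTheorem6:
  fixes X :: "'a sset" and S :: "(nat \<times> 'a) set"
  assumes "sset X" and "S \<subseteq> nondeg X"
  shows "(\<forall>n. enf_q X S n ` sx X n = sx (enf_Y X S) n)
    \<and> (\<exists>p. smap (enf_Y X S) (desing X) p
          \<and> (\<forall>n x. x \<in> sx X n \<longrightarrow> p n (enf_q X S n x) = eta X n x)
          \<and> (\<forall>p'. smap (enf_Y X S) (desing X) p'
                  \<and> (\<forall>n x. x \<in> sx X n \<longrightarrow> p' n (enf_q X S n x) = eta X n x)
                  \<longrightarrow> (\<forall>n y. y \<in> sx (enf_Y X S) n \<longrightarrow> p' n y = p n y))
          \<and> (\<forall>n. p n ` sx (enf_Y X S) n = sx (desing X) n)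
          \<and> (nonsingular (enf_Y X S) \<longrightarrow> siso (enf_Y X S) (desing X) p))"
proof -
  interpret enforcer_pushout X S using assms by unfold_locales
  show ?thesis
  proof (intro conjI exI[of _ "enf_p X"] allI impI)
    show "enf_q X S n ` sx X n = sx (enf_Y X S) n" for n by (rule enf_q_surj)
    show "smap (enf_Y X S) (desing X) (enf_p X)" by (rule smap_enf_p)
    show "enf_p X n (enf_q X S n x) = eta X n x" if "x \<in> sx X n" for n x
      using that by (rule enf_p_q)
    show "p' n y = enf_p X n y"
      if "smap (enf_Y X S) (desing X) p' \<and> (\<forall>n x. x \<in> sx X n \<longrightarrow> p' n (enf_q X S n x) = eta X n x)"
        and "y \<in> sx (enf_Y X S) n" for p' n y
      using that by (intro enf_p_unique) simp_all
    show "enf_p X n ` sx (enf_Y X S) n = sx (desing X) n" for n by (rule enf_p_surj)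
  qed (rule siso_enf_p)
qed

end
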